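(* Let $W=C_3\wr\mathbb{Z}$ and $B(W)=\bigoplus_{\mathbb{Z}}C_3\trianglelefteq W$. If $H\le W$ is almost-normal (i.e. its normaliser $N_W(H)$ has finite index in $W$) and $H\not\subseteq B(W)$, then $|W:H|<\infty$.
   Context: $W=\bigoplus_{\mathbb{Z}}C_3\rtimes\mathbb{Z}$, with $\mathbb{Z}$ acting on $B(W)=\bigoplus_{\mathbb{Z}}C_3$ by shifting coordinates. *)

theory Defs
  imports "HOL-Algebra.Algebra"
begin

text \<open>An element is a pair (f, n) where
  f : int => int is a finitely supported configuration with values in {0,1,2}
  (representing C3 = Z/3Z), and n : int.\<close>

definition wr_carrier :: "((int \<Rightarrow> int) \<times> int) set" where
  "wr_carrier = {(f, n). (\<forall>i. f i \<in> {0, 1, 2}) \<and> finite {i. f i \<noteq> 0}}"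

definition wr_mult :: "((int \<Rightarrow> int) \<times> int) \<Rightarrow> ((int \<Rightarrow> int) \<times> int) \<Rightarrow> ((int \<Rightarrow> int) \<times> int)" where
  "wr_mult x y = ((\<lambda>i. (fst x i + fst y (i - snd x)) mod 3), snd x + snd y)"

definition W :: "((int \<Rightarrow> int) \<times> int) monoid" where
  "W = \<lparr>carrier = wr_carrier, monoid.mult = wr_mult, one = (\<lambda>_. 0, 0)\<rparr>"

definition BW :: "((int \<Rightarrow> int) \<times> int) set" where
  "BW = {x \<in> wr_carrier. snd x = 0}"

end

theory Submission
  imports Defs
begin

text \<open>Pick \<open>h = (f, n)\<close> in \<open>H\<close> with \<open>n \<noteq> 0\<close>. Multiplying by a power of \<open>h\<close> moves
  the \<open>\<int>\<close>-coordinate of any element into the range \<open>\<bar>m\<bar> < \<bar>n\<bar>\<close>. If a base element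
  \<open>\<xi>\<close> normalises \<open>H\<close>, its commutator with \<open>h\<close> is the base element \<open>\<xi> - \<xi>(\<cdot> - n)\<close>,
  which therefore lies in \<open>H\<close>. Every finitely supported configuration has the form
  \<open>c - c(\<cdot> - n) + r\<close> with \<open>r\<close> supported in the window \<open>\<bar>i\<bar> < \<bar>n\<bar>\<close>, and since the
  normaliser has finite index, \<open>c\<close> is a normalising \<open>\<xi>\<close> plus one of finitely many
  representatives \<open>\<gamma>\<close>. So every element lies in \<open>H x\<close> for some \<open>x\<close> with \<open>\<bar>snd x\<bar> < \<bar>n\<bar>\<close>
  and configuration supported in a fixed finite set, and there are finitely many such \<open>x\<close>.\<close>

lemma (in group) transversal_of_finite_index:
  assumes N: "subgroup N G" and fin: "finite (rcosets N)" and A: "A \<subseteq> carrier G"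
  obtains C where "finite C" "C \<subseteq> A" "A \<subseteq> N <#> C"
proof
  define rep where "rep K = (SOME a. a \<in> K \<inter> A)" for K
  let ?C = "rep ` {K \<in> rcosets N. K \<inter> A \<noteq> {}}"
  show "finite ?C" using fin by simp
  show "?C \<subseteq> A" unfolding rep_def by (auto intro: someI2)
  show "A \<subseteq> N <#> ?C"
  proof
    fix a assume a: "a \<in> A"
    with A have ac: "a \<in> carrier G" by blast
    let ?K = "N #> a"
    have aK: "a \<in> ?K" by (rule rcos_self[OF ac N])
    with a have "?K \<inter> A \<noteq> {}" by blast
    moreover have "?K \<in> rcosets N" using ac by (auto simp: RCOSETS_def)
    ultimately have "rep ?K \<in> ?C" "rep ?K \<in> ?K" unfolding rep_def by (blast, auto intro: someI2)
    moreover have "a \<in> N #> rep ?K" using repr_independence[OF \<open>rep ?K \<in> ?K\<close> ac N] aK by simp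
    ultimately show "a \<in> N <#> ?C" unfolding r_coset_def set_mult_def by blast
  qed
qed

lemma (in group) finite_rcosets_if_covered:
  assumes H: "subgroup H G" and "finite F" "F \<subseteq> carrier G" "carrier G \<subseteq> H <#> F"
  shows "finite (rcosets H)"
proof (rule finite_surj[of F _ "\<lambda>r. H #> r"])
  show "finite F" by fact
  show "rcosets H \<subseteq> (\<lambda>r. H #> r) ` F"
  proof
    fix K assume "K \<in> rcosets H"
    then obtain w where w: "w \<in> carrier G" "K = H #> w" by (auto simp: RCOSETS_def)
    then obtain x r where "x \<in> H" "r \<in> F" "w = x \<otimes> r"
      using assms(4) by (auto simp: set_mult_def)
    then have "w \<in> H #> r" by (auto simp: r_coset_def)
    have "H #> r = H #> w"
      using repr_independence[OF \<open>w \<in> H #> r\<close> _ H] \<open>r \<in> F\<close> assms(3) by blast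
    then show "K \<in> (\<lambda>r. H #> r) ` F" using w \<open>r \<in> F\<close> by auto
  qed
qed

lemma (in group) set_mult_subgroup_absorb:
  assumes H: "subgroup H G" and F: "F \<subseteq> carrier G" and "B \<subseteq> H <#> F"
  shows "H <#> B \<subseteq> H <#> F"
proof -
  have Hc: "H \<subseteq> carrier G" using subgroup.subset[OF H] .
  have "H <#> B \<subseteq> H <#> (H <#> F)" by (rule mono_set_mult) (use assms in auto)
  also have "\<dots> = (H <#> H) <#> F" using set_mult_assoc[OF Hc Hc F] by simp
  also have "\<dots> = H <#> F" by (simp add: subgroup_mult_id[OF H])
  finally show ?thesis .
qed

lemma (in group) commutator_mem_if_normalizer:
  assumes H: "subgroup H G" and x: "x \<in> normalizer G H" and h: "h \<in> H"
  shows "x \<otimes> h \<otimes> inv x \<otimes> inv h \<in> H"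
proof -
  have "x <# H #> inv x = H"
    using x subgroup.subset[OF H] by (auto simp: normalizer_def stabilizer_def)
  moreover have "x \<otimes> h \<otimes> inv x \<in> x <# H #> inv x"
    using h by (auto simp: l_coset_def r_coset_def)
  ultimately show ?thesis using h H by (simp add: subgroup.m_closed subgroup.m_inv_closed)
qed

definition window_reducible :: "int \<Rightarrow> (int \<Rightarrow> int) set" where
  "window_reducible n = {g. \<exists>c r. finite {i. c i \<noteq> 0} \<and> (\<forall>i. \<bar>n\<bar> \<le> \<bar>i\<bar> \<longrightarrow> r i = 0)
      \<and> g = (\<lambda>i. c i - c (i - n) + r i)}"

lemma window_reducibleI:
  assumes "finite {i. c i \<noteq> 0}" "\<And>i. \<bar>n\<bar> \<le> \<bar>i\<bar> \<Longrightarrow> r i = 0"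
  shows "(\<lambda>i. c i - c (i - n) + r i) \<in> window_reducible n"
  using assms unfolding window_reducible_def by blast

lemma window_reducible_add:
  assumes "g \<in> window_reducible n" "g' \<in> window_reducible n"
  shows "(\<lambda>i. g i + g' i) \<in> window_reducible n"
proof -
  obtain c r c' r' where
    "finite {i. c i \<noteq> 0}" "\<forall>i. \<bar>n\<bar> \<le> \<bar>i\<bar> \<longrightarrow> r i = 0" "g = (\<lambda>i. c i - c (i - n) + r i)"
    "finite {i. c' i \<noteq> 0}" "\<forall>i. \<bar>n\<bar> \<le> \<bar>i\<bar> \<longrightarrow> r' i = 0" "g' = (\<lambda>i. c' i - c' (i - n) + r' i)"
    using assms unfolding window_reducible_def by blast
  moreover have "finite {i. c i + c' i \<noteq> 0}"
    by (rule finite_subset[of _ "{i. c i \<noteq> 0} \<union> {i. c' i \<noteq> 0}"]) (use calculation in auto)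
  ultimately show ?thesis
    using window_reducibleI[of "\<lambda>i. c i + c' i" n "\<lambda>i. r i + r' i"] by (simp add: algebra_simps)
qed

lemma delta_window_reducible:
  assumes "n \<noteq> 0"
  shows "(\<lambda>i. if i = j then k else 0) \<in> window_reducible n"
proof -
  let ?\<delta> = "\<lambda>b i. if i = b then k else 0"
  have shift_invariant: "?\<delta> b \<in> window_reducible n \<longleftrightarrow> ?\<delta> (b + n) \<in> window_reducible n" for b
  proof -
    have fin: "finite {i. ?\<delta> b i \<noteq> 0}" "finite {i. - ?\<delta> b i \<noteq> 0}"
      by (rule finite_subset[of _ "{b}"]; auto)+
    have cob: "(\<lambda>i. - ?\<delta> b i - - ?\<delta> b (i - n) + 0) \<in> window_reducible n"
      "(\<lambda>i. ?\<delta> b i - ?\<delta> b (i - n) + 0) \<in> window_reducible n"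
      by (rule window_reducibleI[OF fin(2)], simp) (rule window_reducibleI[OF fin(1)], simp)
    have up: "(\<lambda>i. ?\<delta> b i + (- ?\<delta> b i - - ?\<delta> b (i - n) + 0)) = ?\<delta> (b + n)"
      and down: "(\<lambda>i. ?\<delta> (b + n) i + (?\<delta> b i - ?\<delta> b (i - n) + 0)) = ?\<delta> b"
      using assms by (auto simp: fun_eq_iff)
    show ?thesis
    proof
      assume "?\<delta> b \<in> window_reducible n"
      from window_reducible_add[OF this cob(1)] show "?\<delta> (b + n) \<in> window_reducible n"
        unfolding up by simp
    next
      assume "?\<delta> (b + n) \<in> window_reducible n"
      from window_reducible_add[OF this cob(2)] show "?\<delta> b \<in> window_reducible n"
        unfolding down by simp
    qed
  qed
  define a where "a = j mod n"
  have "?\<delta> a \<in> window_reducible n"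
    using window_reducibleI[of "\<lambda>_. 0" n "?\<delta> a"] abs_mod_less[OF assms, of j] by (force simp: a_def)
  then have "?\<delta> (a + q * n) \<in> window_reducible n" for q
  proof (induction q rule: int_induct[where k = 0])
    case (step1 q)
    then show ?case using shift_invariant[of "a + q * n"] by (simp add: algebra_simps)
  next
    case (step2 q)
    then show ?case using shift_invariant[of "a + (q - 1) * n"] by (simp add: algebra_simps)
  qed simp
  from this[of "j div n"] show ?thesis by (simp add: a_def)
qed

lemma finite_support_window_reducible:
  assumes "n \<noteq> 0" "finite {i. g i \<noteq> 0}"
  shows "g \<in> window_reducible n"
proof -
  have "\<forall>g. {i. g i \<noteq> 0} \<subseteq> S \<longrightarrow> g \<in> window_reducible n" if "finite S" for S
    using that
  proof (induction S rule: finite_induct)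
    case empty
    have "(\<lambda>i. if i = 0 then 0 else 0) \<in> window_reducible n"
      by (rule delta_window_reducible[OF assms(1)])
    then show ?case by (simp add: fun_eq_iff)
  next
    case (insert j S)
    show ?case
    proof (intro allI impI)
      fix g :: "int \<Rightarrow> int" assume g: "{i. g i \<noteq> 0} \<subseteq> insert j S"
      have rest: "(\<lambda>i. if i = j then 0 else g i) \<in> window_reducible n"
        by (rule insert.IH[rule_format]) (use g in auto)
      have split: "(\<lambda>i. (if i = j then g j else 0) + (if i = j then 0 else g i)) = g"
        by auto
      from window_reducible_add[OF delta_window_reducible[OF assms(1), of j "g j"] rest]
      show "g \<in> window_reducible n" unfolding split .
    qed
  qed
  then show ?thesis using assms(2) by blast
qed

lemma mod_3_cases: "(x::int) mod 3 = 0 \<or> x mod 3 = 1 \<or> x mod 3 = 2"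
  by presburger

lemma mod_3_eq_self: "(x::int) = 0 \<or> x = 1 \<or> x = 2 \<Longrightarrow> x mod 3 = x"
  by auto

lemma finite_support_shifted_sum:
  fixes f g :: "int \<Rightarrow> int"
  assumes "finite {i. f i \<noteq> 0}" "finite {i. g i \<noteq> 0}"
  shows "finite {i. (f i + g (i - n)) mod 3 \<noteq> 0}"
proof (rule finite_subset)
  show "{i. (f i + g (i - n)) mod 3 \<noteq> 0} \<subseteq> {i. f i \<noteq> 0} \<union> (\<lambda>i. i + n) ` {i. g i \<noteq> 0}"
    by (force intro: image_eqI[where x = "_ - n"])
  show "finite ({i. f i \<noteq> 0} \<union> (\<lambda>i. i + n) ` {i. g i \<noteq> 0})"
    using assms by simp
qed

lemma carrier_W: "carrier W = wr_carrier"
  and mult_W [simp]: "(f, n) \<otimes>\<^bsub>W\<^esub> (g, m) = ((\<lambda>i. (f i + g (i - n)) mod 3), n + m)"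
  and one_W: "\<one>\<^bsub>W\<^esub> = (\<lambda>_. 0, 0)"
  by (simp_all add: W_def wr_mult_def)

lemma mem_carrier_W [simp]:
  "(f, n) \<in> carrier W \<longleftrightarrow> (\<forall>i. f i \<in> {0, 1, 2}) \<and> finite {i. f i \<noteq> 0}"
  by (simp add: carrier_W wr_carrier_def)

lemma snd_mult_W: "snd (x \<otimes>\<^bsub>W\<^esub> y) = snd x + snd y"
  by (simp add: W_def wr_mult_def)

lemma BW_eq: "BW = {x \<in> carrier W. snd x = 0}"
  by (simp add: BW_def carrier_W)

lemma group_W: "group W"
proof (rule groupI)
  fix x y assume "x \<in> carrier W" "y \<in> carrier W"
  then show "x \<otimes>\<^bsub>W\<^esub> y \<in> carrier W"
    by (cases x, cases y) (simp add: finite_support_shifted_sum mod_3_cases)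
next
  fix x y z assume "x \<in> carrier W" "y \<in> carrier W" "z \<in> carrier W"
  then show "x \<otimes>\<^bsub>W\<^esub> y \<otimes>\<^bsub>W\<^esub> z = x \<otimes>\<^bsub>W\<^esub> (y \<otimes>\<^bsub>W\<^esub> z)"
    by (cases x, cases y, cases z) (simp add: mod_simps algebra_simps)
next
  fix x assume "x \<in> carrier W"
  then show "\<one>\<^bsub>W\<^esub> \<otimes>\<^bsub>W\<^esub> x = x"
    by (cases x) (auto simp: one_W fun_eq_iff mod_3_eq_self)
next
  fix x assume x: "x \<in> carrier W"
  obtain f n where [simp]: "x = (f, n)" by (cases x)
  let ?y = "(\<lambda>i. (- f (i + n)) mod 3, - n)"
  have "?y \<in> carrier W"
    using x finite_support_shifted_sum[of "\<lambda>_. 0" "\<lambda>i. - f i" "- n"] by (simp add: mod_3_cases)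
  moreover have "?y \<otimes>\<^bsub>W\<^esub> x = \<one>\<^bsub>W\<^esub>"
    by (simp add: one_W mod_simps)
  ultimately show "\<exists>y\<in>carrier W. y \<otimes>\<^bsub>W\<^esub> x = \<one>\<^bsub>W\<^esub>" by blast
qed (simp add: one_W)

lemma snd_hom_W: "snd \<in> hom W integer_group"
  by (rule homI) (simp_all add: snd_mult_W)

lemma snd_int_pow_W: "x \<in> carrier W \<Longrightarrow> snd (x [^]\<^bsub>W\<^esub> (k::int)) = k * snd x"
  by (simp add: hom_int_pow[OF snd_hom_W _ group_W group_integer_group])

lemma snd_inv_W: "x \<in> carrier W \<Longrightarrow> snd (inv\<^bsub>W\<^esub> x) = - snd x"
  using group_hom.hom_inv[of W integer_group snd] group_W snd_hom_W
  by (simp add: group_hom_def group_hom_axioms_def)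

lemma carrier_W_covered_by_short_elements:
  assumes H: "subgroup H W" and h: "h \<in> H" "snd h \<noteq> 0"
  shows "carrier W \<subseteq> H <#>\<^bsub>W\<^esub> {w \<in> carrier W. \<bar>snd w\<bar> < \<bar>snd h\<bar>}"
proof
  interpret group W by (rule group_W)
  fix w assume w: "w \<in> carrier W"
  have hc: "h \<in> carrier W" using h H subgroup.subset by blast
  define x where "x = h [^]\<^bsub>W\<^esub> (snd w div snd h)"
  have x: "x \<in> H" "x \<in> carrier W" using h hc H by (auto simp: x_def subgroup_int_pow_closed)
  have "snd (inv\<^bsub>W\<^esub> x \<otimes>\<^bsub>W\<^esub> w) = snd w mod snd h"
    using x hc by (simp add: snd_mult_W snd_inv_W x_def snd_int_pow_W minus_div_mult_eq_mod)
  then have "\<bar>snd (inv\<^bsub>W\<^esub> x \<otimes>\<^bsub>W\<^esub> w)\<bar> < \<bar>snd h\<bar>" using abs_mod_less h(2) by simp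
  moreover have "w = x \<otimes>\<^bsub>W\<^esub> (inv\<^bsub>W\<^esub> x \<otimes>\<^bsub>W\<^esub> w)" using x w by (simp add: m_assoc[symmetric])
  ultimately show "w \<in> H <#>\<^bsub>W\<^esub> {w \<in> carrier W. \<bar>snd w\<bar> < \<bar>snd h\<bar>}"
    using x w unfolding set_mult_def by blast
qed

lemma base_commutation_W:
  "(\<xi>, 0) \<otimes>\<^bsub>W\<^esub> (f, n) = ((\<lambda>i. (\<xi> i - \<xi> (i - n)) mod 3), 0) \<otimes>\<^bsub>W\<^esub> (f, n) \<otimes>\<^bsub>W\<^esub> (\<xi>, 0)"
  by (simp add: mod_simps)

lemma shift_difference_mem_subgroup:
  assumes H: "subgroup H W" and "(f, n) \<in> H" and "(\<xi>, 0) \<in> normalizer W H"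
  shows "((\<lambda>i. (\<xi> i - \<xi> (i - n)) mod 3), 0) \<in> H"
proof -
  interpret group W by (rule group_W)
  define d x h where "d = ((\<lambda>i. (\<xi> i - \<xi> (i - n)) mod 3), 0 :: int)" and "x = (\<xi>, 0 :: int)"
    and "h = (f, n)"
  have x: "x \<in> normalizer W H" and h: "h \<in> H" using assms by (simp_all add: x_def h_def)
  have xc: "x \<in> carrier W"
    using x subgroup.subset[OF normalizer_imp_subgroup[OF subgroup.subset[OF H]]] by blast
  have hc: "h \<in> carrier W" using h subgroup.subset[OF H] by blast
  have dc: "d \<in> carrier W"
    using xc finite_support_shifted_sum[of \<xi> "\<lambda>i. - \<xi> i" n] by (simp add: d_def x_def mod_3_cases)
  have "x \<otimes>\<^bsub>W\<^esub> h \<otimes>\<^bsub>W\<^esub> inv\<^bsub>W\<^esub> x \<otimes>\<^bsub>W\<^esub> inv\<^bsub>W\<^esub> h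
      = d \<otimes>\<^bsub>W\<^esub> h \<otimes>\<^bsub>W\<^esub> x \<otimes>\<^bsub>W\<^esub> inv\<^bsub>W\<^esub> x \<otimes>\<^bsub>W\<^esub> inv\<^bsub>W\<^esub> h"
    unfolding d_def x_def h_def base_commutation_W[of \<xi> f n] ..
  also have "\<dots> = d" using dc xc hc by (simp add: m_assoc)
  finally show ?thesis
    using commutator_mem_if_normalizer[OF H x h] by (simp add: d_def)
qed

lemma base_factor_W:
  assumes "(\<phi>, 0) \<in> A <#>\<^bsub>W\<^esub> C" "A \<subseteq> carrier W" "C \<subseteq> BW"
  obtains \<xi> \<gamma> where "(\<xi>, 0) \<in> A" "(\<gamma>, 0) \<in> C" "\<And>i. \<phi> i = (\<xi> i + \<gamma> i) mod 3"
proof -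
  obtain x y where xy: "x \<in> A" "y \<in> C" "(\<phi>, 0) = x \<otimes>\<^bsub>W\<^esub> y"
    using assms(1) unfolding set_mult_def by blast
  obtain \<gamma> where y: "y = (\<gamma>, 0)" using xy(2) assms(3) by (cases y) (auto simp: BW_eq)
  obtain \<xi> k where x: "x = (\<xi>, k)" by (cases x)
  have "k = 0" using xy(3) by (simp add: x y)
  with xy(3) show ?thesis using that xy(1,2) by (simp add: x y)
qed

lemma shift_difference_factorization_W:
  assumes "(g, m) \<in> carrier W" "g = (\<lambda>i. c i - c (i - n) + r i)"
    and "\<And>i. c i mod 3 = (\<xi> i + \<gamma> i) mod 3"
  shows "(g, m) = ((\<lambda>i. (\<xi> i - \<xi> (i - n)) mod 3), 0) \<otimes>\<^bsub>W\<^esub> ((\<lambda>i. (\<gamma> i - \<gamma> (i - n) + r i) mod 3), m)"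
proof -
  have "g i = ((\<xi> i - \<xi> (i - n)) mod 3 + (\<gamma> i - \<gamma> (i - n) + r i) mod 3) mod 3" for i
  proof -
    have "g i = g i mod 3" using assms(1) by (simp add: mod_3_eq_self)
    also have "\<dots> = ((\<xi> i + \<gamma> i) - (\<xi> (i - n) + \<gamma> (i - n)) + r i) mod 3"
      using assms(3)[of i] assms(3)[of "i - n"] by (simp add: assms(2)) (metis mod_add_left_eq mod_diff_eq)
    also have "\<dots> = ((\<xi> i - \<xi> (i - n)) + (\<gamma> i - \<gamma> (i - n) + r i)) mod 3"
      by (simp add: algebra_simps)
    also have "\<dots> = ((\<xi> i - \<xi> (i - n)) mod 3 + (\<gamma> i - \<gamma> (i - n) + r i) mod 3) mod 3"
      by (rule mod_add_eq[symmetric])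
    finally show ?thesis .
  qed
  then show ?thesis by (simp add: fun_eq_iff)
qed

lemma finite_supported_short_W:
  assumes "finite S"
  shows "finite {x \<in> carrier W. {i. fst x i \<noteq> 0} \<subseteq> S \<and> \<bar>snd x\<bar> < k}"
proof (rule finite_subset)
  show "{x \<in> carrier W. {i. fst x i \<noteq> 0} \<subseteq> S \<and> \<bar>snd x\<bar> < k}
      \<subseteq> {f. \<forall>i. (i \<in> S \<longrightarrow> f i \<in> {0, 1, 2}) \<and> (i \<notin> S \<longrightarrow> f i = 0)} \<times> {-k..k}"
    by (force simp: carrier_W wr_carrier_def)
  show "finite ({f. \<forall>i. (i \<in> S \<longrightarrow> f i \<in> {0, 1, 2::int}) \<and> (i \<notin> S \<longrightarrow> f i = 0)} \<times> {-k..k})"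
    using finite_set_of_finite_funs[OF assms, of "{0, 1, 2::int}" 0] by simp
qed

lemma short_elements_covered:
  assumes H: "subgroup H W" and h: "(f, n) \<in> H" "n \<noteq> 0"
    and C: "finite C" "C \<subseteq> BW" "BW \<subseteq> normalizer W H <#>\<^bsub>W\<^esub> C"
  obtains F where "finite F" "F \<subseteq> carrier W" "{w \<in> carrier W. \<bar>snd w\<bar> < \<bar>n\<bar>} \<subseteq> H <#>\<^bsub>W\<^esub> F"
proof
  define S where "S = {i. \<bar>i\<bar> < \<bar>n\<bar>} \<union> (\<Union>\<gamma>\<in>fst ` C. {i. \<gamma> i \<noteq> 0} \<union> (\<lambda>i. i + n) ` {i. \<gamma> i \<noteq> 0})"
  define F where "F = {x \<in> carrier W. {i. fst x i \<noteq> 0} \<subseteq> S \<and> \<bar>snd x\<bar> < \<bar>n\<bar>}"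
  have "finite {i :: int. \<bar>i\<bar> < \<bar>n\<bar>}" by (rule finite_subset[of _ "{-\<bar>n\<bar>..\<bar>n\<bar>}"]) auto
  moreover have "finite {i. \<gamma> i \<noteq> 0}" if "\<gamma> \<in> fst ` C" for \<gamma>
    using that C(2) by (force simp: BW_eq)
  ultimately have "finite S" using C(1) by (simp add: S_def)
  then show "finite F" unfolding F_def by (rule finite_supported_short_W)
  show "F \<subseteq> carrier W" by (simp add: F_def)
  have N: "normalizer W H \<subseteq> carrier W"
    using group.normalizer_imp_subgroup[OF group_W subgroup.subset[OF H]] subgroup.subset by blast
  show "{w \<in> carrier W. \<bar>snd w\<bar> < \<bar>n\<bar>} \<subseteq> H <#>\<^bsub>W\<^esub> F"
  proof clarify
    fix g m assume w: "(g, m) \<in> carrier W" "\<bar>snd (g, m)\<bar> < \<bar>n\<bar>"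
    have "g \<in> window_reducible n" using finite_support_window_reducible[OF h(2)] w(1) by simp
    then obtain c r where c: "finite {i. c i \<noteq> 0}" and r: "\<forall>i. \<bar>n\<bar> \<le> \<bar>i\<bar> \<longrightarrow> r i = 0"
      and g: "g = (\<lambda>i. c i - c (i - n) + r i)"
      unfolding window_reducible_def by blast
    have "((\<lambda>i. c i mod 3), 0) \<in> BW"
      using c by (auto simp: BW_eq mod_3_cases elim: finite_subset[rotated])
    then obtain \<xi> \<gamma> where \<xi>: "(\<xi>, 0) \<in> normalizer W H" and \<gamma>: "(\<gamma>, 0) \<in> C"
      and c_split: "\<And>i. c i mod 3 = (\<xi> i + \<gamma> i) mod 3"
      using base_factor_W[OF _ N C(2)] C(3) by blast
    let ?rest = "((\<lambda>i. (\<gamma> i - \<gamma> (i - n) + r i) mod 3), m)"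
    have "{i. (\<gamma> i - \<gamma> (i - n) + r i) mod 3 \<noteq> 0} \<subseteq> S"
      using r \<gamma> unfolding S_def by (force intro: image_eqI[where x = "_ - n"] rev_bexI[where x = \<gamma>])
    then have "?rest \<in> F"
      using \<open>finite S\<close> w(2) by (auto simp: F_def mod_3_cases elim: finite_subset)
    moreover have "(g, m) = ((\<lambda>i. (\<xi> i - \<xi> (i - n)) mod 3), 0) \<otimes>\<^bsub>W\<^esub> ?rest"
      by (rule shift_difference_factorization_W[OF w(1) g c_split])
    moreover have "((\<lambda>i. (\<xi> i - \<xi> (i - n)) mod 3), 0) \<in> H"
      using shift_difference_mem_subgroup[OF H h(1) \<xi>] .
    ultimately show "(g, m) \<in> H <#>\<^bsub>W\<^esub> F" unfolding set_mult_def by blast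
  qed
qed

theorem proposition4p6:
  assumes "subgroup H W"
    and "finite (rcosets\<^bsub>W\<^esub> (normalizer W H))"
    and "\<not> H \<subseteq> BW"
  shows "finite (rcosets\<^bsub>W\<^esub> H)"
proof -
  interpret group W by (rule group_W)
  have H_carrier: "H \<subseteq> carrier W" using assms(1) by (rule subgroup.subset)
  obtain f n where h: "(f, n) \<in> H" "n \<noteq> 0"
    using assms(3) H_carrier unfolding BW_eq by fastforce
  have "BW \<subseteq> carrier W" by (simp add: BW_eq)
  then obtain C where C: "finite C" "C \<subseteq> BW" "BW \<subseteq> normalizer W H <#>\<^bsub>W\<^esub> C"
    using transversal_of_finite_index[OF normalizer_imp_subgroup[OF H_carrier] assms(2)] by blast
  obtain F where F: "finite F" "F \<subseteq> carrier W" "{w \<in> carrier W. \<bar>snd w\<bar> < \<bar>n\<bar>} \<subseteq> H <#>\<^bsub>W\<^esub> F"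
    using short_elements_covered[OF assms(1) h C] by blast
  have "carrier W \<subseteq> H <#>\<^bsub>W\<^esub> {w \<in> carrier W. \<bar>snd w\<bar> < \<bar>n\<bar>}"
    using carrier_W_covered_by_short_elements[OF assms(1) h(1)] h(2) by simp
  also have "\<dots> \<subseteq> H <#>\<^bsub>W\<^esub> F"
    by (rule set_mult_subgroup_absorb[OF assms(1) F(2,3)])
  finally show ?thesis by (rule finite_rcosets_if_covered[OF assms(1) F(1,2)])
qed

end
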